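(* Let $\Lambda\subset\mathbb{R}^d$ be a full-rank lattice and $P=\Lambda\cap[0,1)^d$, and assume $|P|\ge 2$. Then $q(P)\ge q(\Lambda)$ and \[ h(P)\le \begin{cases} 2\sqrt{d}\, h(\Lambda) & \text{if } h(\Lambda)\ge 1/2,\\ (1+\sqrt{d})\,h(\Lambda) & \text{otherwise.}\end{cases} \] Consequently, \[ \rho(P)\le \begin{cases} 2\sqrt{d}\, \rho(\Lambda) & \text{if } h(\Lambda)\ge 1/2,\\ (1+\sqrt{d})\,\rho(\Lambda) & \text{otherwise.}\end{cases} \]
   Context: For a finite point set $P\subset[0,1]^d$ with at least two points: covering radius $h(P)=\sup_{x\in[0,1]^d}\min_{y\in P}\|x-y\|_2$, separation radius $q(P)=\frac12\min_{x,y\in P,\,x\ne y}\|x-y\|_2$, mesh ratio $\rho(P)=h(P)/q(P)$. For a full-rank lattice $\Lambda\subset\mathbb{R}^d$: $h(\Lambda)=\sup_{x\in\mathbb{R}^d}\min_{y\in\Lambda}\|x-y\|_2$, $q(\Lambda)=\frac12\min_{x\in\Lambda\setminus\{0\}}\|x\|_2$, $\rho(\Lambda)=h(\Lambda)/q(\Lambda)$. *)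

theory Defs
  imports "HOL-Analysis.Analysis"
begin

definition lattice_of :: "real^'d^'d \<Rightarrow> (real^'d) set" where
  "lattice_of B = {B *v (\<chi> i. real_of_int (z $ i)) | z :: int^'d. True}"

definition full_rank_lattice :: "(real^'d) set \<Rightarrow> bool" where
  "full_rank_lattice L \<longleftrightarrow> (\<exists>B. invertible B \<and> L = lattice_of B)"

definition unit_cube :: "(real^'d) set" where
  "unit_cube = {x. \<forall>i. 0 \<le> x $ i \<and> x $ i \<le> 1}"

definition half_open_cube :: "(real^'d) set" where
  "half_open_cube = {x. \<forall>i. 0 \<le> x $ i \<and> x $ i < 1}"

definition cover_rad :: "(real^'d) set \<Rightarrow> real" where
  "cover_rad P = (SUP x\<in>unit_cube. Min ((\<lambda>y. dist x y) ` P))"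

definition sep_rad :: "(real^'d) set \<Rightarrow> real" where
  "sep_rad P = Min {dist x y | x y. x \<in> P \<and> y \<in> P \<and> x \<noteq> y} / 2"

definition mesh_ratio :: "(real^'d) set \<Rightarrow> real" where
  "mesh_ratio P = cover_rad P / sep_rad P"

text \<open>Covering radius, separation radius and mesh ratio of a lattice
  (the minima are attained; written as infima).\<close>

definition lat_cover_rad :: "(real^'d) set \<Rightarrow> real" where
  "lat_cover_rad L = (SUP x\<in>UNIV. INF y\<in>L. dist x y)"

definition lat_sep_rad :: "(real^'d) set \<Rightarrow> real" where
  "lat_sep_rad L = (INF x\<in>L - {0}. norm x) / 2"

definition lat_mesh_ratio :: "(real^'d) set \<Rightarrow> real" where
  "lat_mesh_ratio L = lat_cover_rad L / lat_sep_rad L"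

end

theory Submission
  imports Defs
begin

text \<open>Differences of points of \<open>P\<close> are nonzero lattice vectors, whence \<open>q(P) \<ge> q(\<Lambda>)\<close>.
  For the covering radius \<open>h = h(\<Lambda>)\<close>: if \<open>h \<ge> 1/2\<close>, a single point of \<open>P\<close> is within the cube
  diameter \<open>\<surd>d \<le> 2 \<surd>d h\<close> of every point of the cube. If \<open>h < 1/2\<close>, clamp \<open>x \<in> [0,1]\<^sup>d\<close>
  coordinatewise into the shrunken cube \<open>[h, 1 - h]\<^sup>d\<close>, moving it by at most \<open>\<surd>d h\<close>; a lattice
  point within \<open>h\<close> of the clamped point lies in \<open>[0,1)\<^sup>d\<close>, so \<open>h(P) \<le> (1 + \<surd>d) h\<close>
  (with an arbitrarily small slack, which avoids showing that nearest lattice points exist).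
  The mesh ratio bound follows by dividing.\<close>

lemma norm_le_sqrt_CARD_mult:
  fixes v :: "real^'d"
  assumes "\<And>i. \<bar>v$i\<bar> \<le> c"
  shows "norm v \<le> sqrt (real CARD('d)) * c"
proof -
  have c: "0 \<le> c" using assms[of undefined] by simp
  have "(\<Sum>i\<in>UNIV. (v$i)\<^sup>2) \<le> (\<Sum>i\<in>(UNIV::'d set). c\<^sup>2)"
    by (rule sum_mono) (metis abs_le_square_iff abs_of_nonneg assms c)
  then have "sqrt (\<Sum>i\<in>UNIV. (v$i)\<^sup>2) \<le> sqrt (real CARD('d) * c\<^sup>2)"
    by (intro real_sqrt_le_mono) simp
  then show ?thesis using c by (simp add: norm_vec_def L2_set_def real_sqrt_mult)
qed

lemma lattice_of_diff:
  assumes "x \<in> lattice_of B" "y \<in> lattice_of B"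
  shows "x - y \<in> lattice_of B"
proof -
  obtain z1 z2 where z: "x = B *v (\<chi> i. real_of_int (z1 $ i))" "y = B *v (\<chi> i. real_of_int (z2 $ i))"
    using assms unfolding lattice_of_def by auto
  have "(\<chi> i. real_of_int (z1 $ i)) - (\<chi> i. real_of_int (z2 $ i)) = (\<chi> i. real_of_int ((z1 - z2) $ i))"
    by (simp add: vec_eq_iff)
  then have "x - y = B *v (\<chi> i. real_of_int ((z1 - z2) $ i))"
    by (metis z matrix_vector_mult_diff_distrib)
  then show ?thesis unfolding lattice_of_def by blast
qed

lemma lattice_of_dist_bounded:
  fixes B :: "real^'d^'d"
  assumes "invertible B"
  shows "\<exists>R. \<forall>x. \<exists>y\<in>lattice_of B. dist x y \<le> R"
proof -
  obtain A where A: "A ** B = mat 1" "B ** A = mat 1" using assms unfolding invertible_def by auto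
  obtain K where K: "\<And>v. norm (B *v v) \<le> norm v * K"
    using bounded_linear.pos_bounded[OF matrix_vector_mul_bounded_linear[of B]] by auto
  have "\<exists>y\<in>lattice_of B. dist x y \<le> sqrt (real CARD('d)) * \<bar>K\<bar>" for x
  proof -
    define t where "t = A *v x"
    define w where "w = (\<chi> i. real_of_int ((\<chi> j. floor (t$j)) $ i))"
    have "B *v w \<in> lattice_of B" unfolding w_def lattice_of_def by blast
    have "\<bar>(t - w)$i\<bar> \<le> 1" for i unfolding w_def by (simp; linarith)
    then have tw: "norm (t - w) \<le> sqrt (real CARD('d)) * 1" by (rule norm_le_sqrt_CARD_mult)
    have "dist x (B *v w) = norm (B *v (t - w))"
      unfolding t_def by (simp add: dist_norm matrix_vector_mult_diff_distrib matrix_vector_mul_assoc A)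
    also have "\<dots> \<le> norm (t - w) * \<bar>K\<bar>" using K[of "t - w"] by (simp add: order_trans mult_left_mono)
    also have "\<dots> \<le> sqrt (real CARD('d)) * \<bar>K\<bar>" using tw by (simp add: mult_right_mono)
    finally show ?thesis using \<open>B *v w \<in> lattice_of B\<close> by blast
  qed
  then show ?thesis by blast
qed

lemma lattice_of_norm_bounded_below:
  fixes B :: "real^'d^'d"
  assumes "invertible B"
  shows "\<exists>c>0. \<forall>v\<in>lattice_of B - {0}. c \<le> norm v"
proof -
  obtain A where A: "A ** B = mat 1" using assms unfolding invertible_def by auto
  obtain K where K: "K > 0" "\<And>v. norm (A *v v) \<le> norm v * K"
    using bounded_linear.pos_bounded[OF matrix_vector_mul_bounded_linear[of A]] by auto
  have "1 / K \<le> norm v" if v: "v \<in> lattice_of B - {0}" for v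
  proof -
    obtain z where z: "v = B *v (\<chi> i. real_of_int (z $ i))" using v unfolding lattice_of_def by auto
    then have Av: "A *v v = (\<chi> i. real_of_int (z $ i))" by (simp add: matrix_vector_mul_assoc A)
    have "(\<chi> i. real_of_int (z $ i)) \<noteq> 0" using v z by auto
    then obtain i where "z $ i \<noteq> 0" by (auto simp: vec_eq_iff)
    then have "1 \<le> \<bar>(A *v v) $ i\<bar>" unfolding Av by simp
    also have "\<dots> \<le> norm (A *v v)" by (rule component_le_norm_cart)
    also have "\<dots> \<le> norm v * K" by (rule K)
    finally show ?thesis using K by (simp add: field_simps)
  qed
  with K(1) show ?thesis by (intro exI[of _ "1 / K"]) auto
qed

lemma full_rank_lattice_diff:
  assumes "full_rank_lattice L" "x \<in> L" "y \<in> L"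
  shows "x - y \<in> L"
  using assms lattice_of_diff unfolding full_rank_lattice_def by blast

lemma full_rank_lattice_nonzero:
  fixes L :: "(real^'d) set"
  assumes "full_rank_lattice L"
  shows "L - {0} \<noteq> {}"
proof -
  obtain B where B: "invertible B" "L = lattice_of B"
    using assms unfolding full_rank_lattice_def by blast
  have "B *v (\<chi> i. real_of_int ((1 :: int^'d) $ i)) \<in> L" unfolding B(2) lattice_of_def by blast
  moreover have "B *v x = 0 \<Longrightarrow> x = 0" for x
    using B(1) matrix_left_invertible_ker[of B] unfolding invertible_def by blast
  moreover have "(\<chi> i. real_of_int ((1 :: int^'d) $ i)) \<noteq> 0" by (simp add: vec_eq_iff)
  ultimately show ?thesis by (metis Diff_iff empty_iff singletonD)
qed

lemma lat_sep_rad_pos: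
  assumes "full_rank_lattice L"
  shows "0 < lat_sep_rad L"
proof -
  obtain B where B: "invertible B" "L = lattice_of B"
    using assms unfolding full_rank_lattice_def by blast
  obtain c where c: "c > 0" "\<forall>v\<in>L - {0}. c \<le> norm v"
    using lattice_of_norm_bounded_below[OF B(1)] B(2) by blast
  have "c \<le> (INF v\<in>L - {0}. norm v)"
    using c(2) full_rank_lattice_nonzero[OF assms] by (intro cINF_greatest) auto
  with c(1) show ?thesis unfolding lat_sep_rad_def by simp
qed

lemma dist_ge_lat_sep_rad:
  assumes "full_rank_lattice L" "x \<in> L" "y \<in> L" "x \<noteq> y"
  shows "2 * lat_sep_rad L \<le> dist x y"
proof -
  have "bdd_below (norm ` (L - {0}))" by (rule bdd_belowI2[of _ 0]) simp
  moreover have "x - y \<in> L - {0}" using assms full_rank_lattice_diff by auto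
  ultimately have "(INF v\<in>L - {0}. norm v) \<le> norm (x - y)" by (rule cINF_lower)
  then show ?thesis by (simp add: lat_sep_rad_def dist_norm)
qed

lemma INF_dist_le_lat_cover_rad:
  assumes "full_rank_lattice L"
  shows "(INF y\<in>L. dist x y) \<le> lat_cover_rad L"
proof -
  obtain B where B: "invertible B" "L = lattice_of B"
    using assms unfolding full_rank_lattice_def by blast
  obtain R where R: "\<forall>x. \<exists>y\<in>L. dist x y \<le> R" using lattice_of_dist_bounded[OF B(1)] B(2) by blast
  have bdd: "bdd_below ((\<lambda>y. dist x y) ` L)" for x by (rule bdd_belowI2[of _ 0]) simp
  have "(INF y\<in>L. dist x y) \<le> R" for x
    using R cINF_lower2[OF bdd] by blast
  then have "bdd_above (range (\<lambda>x. INF y\<in>L. dist x y))" by (intro bdd_aboveI2)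
  then show ?thesis unfolding lat_cover_rad_def by (rule cSUP_upper[rotated]) simp
qed

lemma lat_cover_rad_nonneg:
  assumes "full_rank_lattice L"
  shows "0 \<le> lat_cover_rad L"
proof -
  have "L \<noteq> {}" using full_rank_lattice_nonzero[OF assms] by blast
  then have "0 \<le> (INF y\<in>L. dist 0 y)" by (intro cINF_greatest) auto
  then show ?thesis using INF_dist_le_lat_cover_rad[OF assms] by (rule order_trans)
qed

lemma exists_lattice_point_dist_less:
  assumes "full_rank_lattice L" "0 < e"
  shows "\<exists>y\<in>L. dist x y < lat_cover_rad L + e"
proof -
  have "L \<noteq> {}" using full_rank_lattice_nonzero[OF assms(1)] by blast
  moreover have "bdd_below ((\<lambda>y. dist x y) ` L)" by (rule bdd_belowI2[of _ 0]) simp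
  moreover have "(INF y\<in>L. dist x y) < lat_cover_rad L + e"
    using INF_dist_le_lat_cover_rad[OF assms(1), of x] assms(2) by linarith
  ultimately show ?thesis by (simp add: cINF_less_iff)
qed

lemma sep_rad_ge:
  assumes "finite P" "x \<in> P" "y \<in> P" "x \<noteq> y"
    and "\<And>x y. x \<in> P \<Longrightarrow> y \<in> P \<Longrightarrow> x \<noteq> y \<Longrightarrow> 2 * q \<le> dist x y"
  shows "q \<le> sep_rad P"
proof -
  let ?D = "{dist x y | x y. x \<in> P \<and> y \<in> P \<and> x \<noteq> y}"
  have "?D \<subseteq> (\<lambda>(x, y). dist x y) ` (P \<times> P)" by auto
  then have "finite ?D" using assms(1) finite_subset by blast
  moreover have "?D \<noteq> {}" using assms(2-4) by blast
  ultimately have "2 * q \<le> Min ?D" using assms(5) by (subst Min_ge_iff) auto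
  then show ?thesis unfolding sep_rad_def by simp
qed

lemma cover_rad_le:
  assumes "finite P" "\<And>x. x \<in> unit_cube \<Longrightarrow> \<exists>y\<in>P. dist x y \<le> M"
  shows "cover_rad P \<le> M"
  unfolding cover_rad_def
proof (rule cSUP_least)
  show "unit_cube \<noteq> {}" unfolding unit_cube_def by (auto intro: exI[of _ 0])
next
  fix x :: "real^'a" assume "x \<in> unit_cube"
  then obtain y where "y \<in> P" "dist x y \<le> M" using assms(2) by blast
  then show "Min ((\<lambda>y. dist x y) ` P) \<le> M"
    using assms(1) by (meson Min_le finite_imageI image_eqI order_trans)
qed

lemma half_open_cube_subset_unit_cube: "half_open_cube \<subseteq> unit_cube"
  unfolding half_open_cube_def unit_cube_def by (auto simp: less_imp_le)

lemma cover_rad_le_sqrt_CARD: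
  fixes P :: "(real^'d) set"
  assumes "finite P" "p \<in> P" "p \<in> unit_cube"
  shows "cover_rad P \<le> sqrt (real CARD('d))"
proof (rule cover_rad_le[OF assms(1)])
  fix x :: "real^'d" assume x: "x \<in> unit_cube"
  have "\<bar>(x - p)$i\<bar> \<le> 1" for i
  proof -
    have "0 \<le> x$i" "x$i \<le> 1" "0 \<le> p$i" "p$i \<le> 1"
      using x assms(3) unfolding unit_cube_def by auto
    then show ?thesis by simp
  qed
  then have "norm (x - p) \<le> sqrt (real CARD('d)) * 1" by (rule norm_le_sqrt_CARD_mult)
  then show "\<exists>y\<in>P. dist x y \<le> sqrt (real CARD('d))" using assms(2) by (auto simp: dist_norm)
qed

lemma exists_lattice_point_in_half_open_cube_near:
  fixes L :: "(real^'d) set"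
  assumes L: "full_rank_lattice L" and x: "x \<in> unit_cube"
    and e: "0 < e" "lat_cover_rad L + e \<le> 1/2"
  shows "\<exists>y\<in>L \<inter> half_open_cube. dist x y \<le> (1 + sqrt (real CARD('d))) * (lat_cover_rad L + e)"
proof -
  define r where "r = lat_cover_rad L + e"
  have r: "0 < r" "r \<le> 1/2" using lat_cover_rad_nonneg[OF L] e unfolding r_def by auto
  define x' where "x' = (\<chi> i. max r (min (1 - r) (x$i)))"
  obtain y where y: "y \<in> L" "dist x' y < r"
    using exists_lattice_point_dist_less[OF L e(1)] unfolding r_def by blast
  have y_near: "\<bar>x'$i - y$i\<bar> < r" for i
    using component_le_norm_cart[of "x' - y" i] y(2) by (simp add: dist_norm)
  have x'_inner: "r \<le> x'$i" "x'$i \<le> 1 - r" for i unfolding x'_def using r by auto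
  have "0 \<le> y$i \<and> y$i < 1" for i
    using y_near[of i] x'_inner[of i] unfolding abs_less_iff by linarith
  then have "y \<in> half_open_cube" unfolding half_open_cube_def by blast
  have "\<bar>(x - x')$i\<bar> \<le> r" for i
    using x r unfolding unit_cube_def x'_def by (auto simp: abs_le_iff max_def min_def)
  then have "dist x x' \<le> sqrt (real CARD('d)) * r" unfolding dist_norm by (rule norm_le_sqrt_CARD_mult)
  then have "dist x y \<le> (1 + sqrt (real CARD('d))) * r"
    using dist_triangle[of x y x'] y(2) by (simp add: algebra_simps)
  with \<open>y \<in> L\<close> \<open>y \<in> half_open_cube\<close> show ?thesis unfolding r_def by blast
qed

lemma cover_rad_lattice_points_le:
  fixes L :: "(real^'d) set"
  assumes L: "full_rank_lattice L" and h: "lat_cover_rad L < 1/2"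
    and fin: "finite (L \<inter> half_open_cube)"
  shows "cover_rad (L \<inter> half_open_cube) \<le> (1 + sqrt (real CARD('d))) * lat_cover_rad L"
proof (rule field_le_epsilon)
  fix e :: real assume "0 < e"
  define C where "C = 1 + sqrt (real CARD('d))"
  define e' where "e' = min (e / C) (1/2 - lat_cover_rad L)"
  have C: "1 \<le> C" unfolding C_def by simp
  have e': "0 < e'" "lat_cover_rad L + e' \<le> 1/2" "C * e' \<le> e"
    using \<open>0 < e\<close> h C unfolding e'_def by (auto simp: min_def field_simps)
  show "cover_rad (L \<inter> half_open_cube) \<le> C * lat_cover_rad L + e"
  proof (rule cover_rad_le[OF fin])
    fix x :: "real^'d" assume "x \<in> unit_cube"
    then obtain y where "y \<in> L \<inter> half_open_cube" "dist x y \<le> C * (lat_cover_rad L + e')"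
      using exists_lattice_point_in_half_open_cube_near[OF L _ e'(1,2)] unfolding C_def by blast
    moreover have "C * (lat_cover_rad L + e') \<le> C * lat_cover_rad L + e"
      using e'(3) by (simp add: algebra_simps)
    ultimately show "\<exists>y\<in>L \<inter> half_open_cube. dist x y \<le> C * lat_cover_rad L + e" by force
  qed
qed

lemma mesh_ratio_le:
  assumes "0 < q" "q \<le> sep_rad P" "cover_rad P \<le> C * h" "0 \<le> C" "0 \<le> h"
  shows "mesh_ratio P \<le> C * (h / q)"
proof -
  have "mesh_ratio P \<le> C * h / sep_rad P"
    unfolding mesh_ratio_def using assms by (intro divide_right_mono) auto
  also have "\<dots> \<le> C * h / q" using assms by (intro divide_left_mono) auto
  finally show ?thesis by simp
qed

theorem mainTheorem3:
  fixes L :: "(real^'d) set" and P :: "(real^'d) set"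
  assumes "full_rank_lattice L"
    and "P = L \<inter> half_open_cube"
    and "card P \<ge> 2"
  shows "sep_rad P \<ge> lat_sep_rad L
    \<and> cover_rad P \<le> (if lat_cover_rad L \<ge> 1/2
                       then 2 * sqrt (real CARD('d)) * lat_cover_rad L
                       else (1 + sqrt (real CARD('d))) * lat_cover_rad L)
    \<and> mesh_ratio P \<le> (if lat_cover_rad L \<ge> 1/2
                       then 2 * sqrt (real CARD('d)) * lat_mesh_ratio L
                       else (1 + sqrt (real CARD('d))) * lat_mesh_ratio L)"
proof -
  define h where "h = lat_cover_rad L"
  define sd where "sd = sqrt (real CARD('d))"
  have fin: "finite P" using assms(3) card.infinite by fastforce
  then obtain p p' where p: "p \<in> P" "p' \<in> P" "p \<noteq> p'"
    using assms(3) card_le_Suc0_iff_eq[of P] by auto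
  have sep: "lat_sep_rad L \<le> sep_rad P"
    using sep_rad_ge[OF fin p] dist_ge_lat_sep_rad[OF assms(1)] assms(2) by blast
  have cov_large: "cover_rad P \<le> 2 * sd * h" if "1/2 \<le> h"
  proof -
    have "p \<in> unit_cube" using p(1) assms(2) half_open_cube_subset_unit_cube by blast
    then have "cover_rad P \<le> sd" unfolding sd_def by (rule cover_rad_le_sqrt_CARD[OF fin p(1)])
    also have "sd \<le> 2 * sd * h" using that mult_left_mono[of 1 "2 * h" sd] unfolding sd_def by simp
    finally show ?thesis .
  qed
  have cov_small: "cover_rad P \<le> (1 + sd) * h" if "h < 1/2"
    using cover_rad_lattice_points_le[OF assms(1)] that fin assms(2) unfolding h_def sd_def by simp
  have mesh: "mesh_ratio P \<le> C * lat_mesh_ratio L" if "cover_rad P \<le> C * h" "0 \<le> C" for C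
    using mesh_ratio_le[OF lat_sep_rad_pos[OF assms(1)] sep] that lat_cover_rad_nonneg[OF assms(1)]
    unfolding lat_mesh_ratio_def h_def by blast
  show ?thesis
    using sep cov_large cov_small mesh[of "2 * sd"] mesh[of "1 + sd"]
    unfolding h_def sd_def by (auto simp: mult.assoc)
qed

end
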